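(* For every $\omega$-type $\tau$, the set $\mathbb P_\tau$ is a Borel subset of $\mathcal P(\omega^2)$ and is dense in $\mathbb P$: for every $A\in\mathbb P$ there is $B\subseteq A$ with $B\in\mathbb P_\tau$. Consequently $\mathbb P$ is partitioned into continuum many dense Borel pieces $\mathbb P_\tau$.
   Context: $\mathcal P(\omega^2)$ is identified with $2^{\omega^2}$ with the product topology. $\mathbb P$ is the set of all $A\subseteq\omega^2$ such that: (1) $A$ has infinitely many infinite sections and no nonempty finite sections, where $A(x)=\{y:\langle x,y\rangle\in A\}$; (2) sections pairwise disjoint; (3) every $\langle x,y\rangle\in A$ has $x<y$; (4) for $\langle x,y\rangle,\langle x',y'\rangle\in A$, $x\neq y'$. An $\omega$-type is a linear pre-order of formal symbols $x_1,x_2,\dots,y_1,y_2,\dots$ such that $y_1<y_2<\dots$, each $x_i$ precedes $y_i$, each equivalence class is either a single $y_i$ or infinitely many $x_i$'s, there are infinitely many equivalence classes of $x$'s, and the induced order of equivalence classes has order type $\omega$. An element $A\in\mathbb P$, listed as $\{\langle a_i,b_i\rangle:i\ge1\}$ with $b_1<b_2<\cdots$, realizes the $\omega$-type consisting of exactly those inequalities among the symbols that hold when $x_i$ is interpreted as $a_i$ and $y_j$ as $b_j$ (each $A\in\mathbb P$ realizes a unique $\omega$-type). $\mathbb P_\tau$ is the set of elements of $\mathbb P$ realizing $\tau$. *)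

theory Defs
  imports "HOL-Analysis.Analysis" "HOL-Library.Infinite_Set" "HOL-Library.Equipollence"
begin

text \<open>Subsets of omega^2 are sets of pairs of naturals; P(omega^2) is identified
with the product space 2^(omega^2), i.e. the type (nat \<times> nat) \<Rightarrow> bool with the
product topology (bool carries the discrete topology), via characteristic functions.\<close>

definition char_fun :: "(nat \<times> nat) set \<Rightarrow> (nat \<times> nat \<Rightarrow> bool)" where
  "char_fun A = (\<lambda>p. p \<in> A)"

definition is_Borel_family :: "(nat \<times> nat) set set \<Rightarrow> bool" where
  "is_Borel_family F \<longleftrightarrow> char_fun ` F \<in> sets (borel :: (nat \<times> nat \<Rightarrow> bool) measure)"

definition sec :: "(nat \<times> nat) set \<Rightarrow> nat \<Rightarrow> nat set" where
  "sec A x = {y. (x, y) \<in> A}"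

definition in_PP :: "(nat \<times> nat) set \<Rightarrow> bool" where
  "in_PP A \<longleftrightarrow>
     infinite {x. infinite (sec A x)} \<and>
     (\<forall>x. sec A x \<noteq> {} \<longrightarrow> infinite (sec A x)) \<and>
     (\<forall>x x'. x \<noteq> x' \<longrightarrow> sec A x \<inter> sec A x' = {}) \<and>
     (\<forall>x y. (x, y) \<in> A \<longrightarrow> x < y) \<and>
     (\<forall>x y x' y'. (x, y) \<in> A \<longrightarrow> (x', y') \<in> A \<longrightarrow> x \<noteq> y')"

definition PP :: "(nat \<times> nat) set set" where
  "PP = {A. in_PP A}"

text \<open>Formal symbols x_i, y_i (indexed from 0 instead of 1).\<close>
datatype sym = X nat | Y nat

text \<open>An omega-type is a linear pre-order (given by its \<le> relation) on the symbols.\<close>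
definition sym_lt :: "(sym \<Rightarrow> sym \<Rightarrow> bool) \<Rightarrow> sym \<Rightarrow> sym \<Rightarrow> bool" where
  "sym_lt \<tau> s t \<longleftrightarrow> \<tau> s t \<and> \<not> \<tau> t s"

definition sym_cls :: "(sym \<Rightarrow> sym \<Rightarrow> bool) \<Rightarrow> sym \<Rightarrow> sym set" where
  "sym_cls \<tau> s = {t. \<tau> s t \<and> \<tau> t s}"

definition omega_type :: "(sym \<Rightarrow> sym \<Rightarrow> bool) \<Rightarrow> bool" where
  "omega_type \<tau> \<longleftrightarrow>
     (\<forall>s. \<tau> s s) \<and> (\<forall>s t u. \<tau> s t \<longrightarrow> \<tau> t u \<longrightarrow> \<tau> s u) \<and> (\<forall>s t. \<tau> s t \<or> \<tau> t s) \<and>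
     (\<forall>i j. i < j \<longrightarrow> sym_lt \<tau> (Y i) (Y j)) \<and>
     (\<forall>i. sym_lt \<tau> (X i) (Y i)) \<and>
     (\<forall>s. (\<exists>i. sym_cls \<tau> s = {Y i}) \<or>
          (infinite (sym_cls \<tau> s) \<and> (\<forall>t\<in>sym_cls \<tau> s. \<exists>i. t = X i))) \<and>
     infinite {sym_cls \<tau> (X i) | i. True} \<and>
     (\<forall>s. finite {sym_cls \<tau> t | t. sym_lt \<tau> t s})"

text \<open>Listing A as pairs (a_i, b_i) with b_0 < b_1 < ...\<close>
definition bseq :: "(nat \<times> nat) set \<Rightarrow> nat \<Rightarrow> nat" where
  "bseq A i = enumerate (snd ` A) i"

definition aseq :: "(nat \<times> nat) set \<Rightarrow> nat \<Rightarrow> nat" where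
  "aseq A i = (THE x. (x, bseq A i) \<in> A)"

fun sym_val :: "(nat \<times> nat) set \<Rightarrow> sym \<Rightarrow> nat" where
  "sym_val A (X i) = aseq A i"
| "sym_val A (Y j) = bseq A j"

definition realizes :: "(nat \<times> nat) set \<Rightarrow> (sym \<Rightarrow> sym \<Rightarrow> bool) \<Rightarrow> bool" where
  "realizes A \<tau> \<longleftrightarrow> (\<forall>s t. \<tau> s t \<longleftrightarrow> sym_val A s \<le> sym_val A t)"

definition PP_type :: "(sym \<Rightarrow> sym \<Rightarrow> bool) \<Rightarrow> (nat \<times> nat) set set" where
  "PP_type \<tau> = {A \<in> PP. realizes A \<tau>}"

end

theory Submission
  imports Defs
begin

text \<open>An element of \<open>\<P>\<close> is the same thing as a listing \<open>(a\<^sub>i, b\<^sub>i)\<close> with \<open>b\<close> strictly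
increasing, \<open>a\<^sub>i < b\<^sub>i\<close>, no \<open>a\<^sub>i\<close> equal to a \<open>b\<^sub>j\<close>, every value of \<open>a\<close> taken infinitely often
and infinitely many such values; its \<open>\<omega>\<close>-type is the pre-order these numbers induce on the
symbols. Conversely, the ranks of the classes of an \<open>\<omega>\<close>-type \<open>\<tau>\<close> form such a listing, so
\<open>\<tau>\<close> is realized, and for density one embeds the ranks into a given \<open>A \<in> \<P>\<close> by a greedy,
strictly increasing choice: a rank carrying an \<open>x\<close>-class goes to a fresh \<open>x\<close> with nonempty,
hence infinite, section, a rank carrying \<open>y\<^sub>j\<close> to a fresh point of the section already
chosen for \<open>x\<^sub>j\<close>. Borelness holds because \<open>A \<in> \<P>\<^sub>\<tau>\<close> is an arithmetical condition on
the characteristic function of \<open>A\<close>: \<open>b\<^sub>j = v\<close> says that \<open>v\<close> is a second coordinate with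
exactly \<open>j\<close> second coordinates below it. There are at most continuum many types since they
are relations on a countable set, and at least continuum many since membership \<open>m \<in> S\<close> can
be coded into whether \<open>x\<^sub>1\<close> and \<open>x\<^sub>2\<^sub>m\<close> are equivalent.\<close>

instance sym :: countable
  by countable_datatype

fun listing_val :: "(nat \<Rightarrow> nat) \<Rightarrow> (nat \<Rightarrow> nat) \<Rightarrow> sym \<Rightarrow> nat" where
  "listing_val a b (X i) = a i"
| "listing_val a b (Y j) = b j"

definition pairs_of :: "(nat \<Rightarrow> nat) \<Rightarrow> (nat \<Rightarrow> nat) \<Rightarrow> (nat \<times> nat) set" where
  "pairs_of a b = range (\<lambda>i. (a i, b i))"

definition PP_listing :: "(nat \<Rightarrow> nat) \<Rightarrow> (nat \<Rightarrow> nat) \<Rightarrow> bool" where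
  "PP_listing a b \<longleftrightarrow> strict_mono b \<and> (\<forall>i. a i < b i) \<and> (\<forall>i j. a i \<noteq> b j) \<and>
     (\<forall>i. infinite {k. a k = a i}) \<and> infinite (range a)"

lemma enumerate_range_strict_mono:
  fixes b :: "nat \<Rightarrow> nat"
  assumes "strict_mono b"
  shows "enumerate (range b) = b"
proof
  have inf: "infinite (range b)"
    using assms strict_mono_imp_inj_on range_inj_infinite by blast
  fix n show "enumerate (range b) n = b n"
  proof (induction n)
    case 0
    show ?case
      by (auto simp: enumerate_0 assms strict_mono_less_eq intro!: Least_equality)
  next
    case (Suc n)
    show ?case
      using assms by (auto simp: enumerate_Suc''[OF inf] Suc strict_mono_less
          strict_mono_less_eq Suc_le_eq intro!: Least_equality)
  qed
qed

lemma strict_mono_eq_iff_card_below: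
  fixes b :: "nat \<Rightarrow> nat"
  assumes b: "strict_mono b"
  shows "b i = v \<longleftrightarrow> v \<in> range b \<and> card {w \<in> range b. w < v} = i"
proof -
  have "card {w \<in> range b. w < b n} = n" for n
  proof -
    have "{w \<in> range b. w < b n} = b ` {..<n}"
      using b by (auto simp: strict_mono_less)
    then show ?thesis
      by (simp add: card_image[OF strict_mono_imp_inj_on[OF b]])
  qed
  then show ?thesis by auto
qed

lemma PP_listing_comp:
  assumes "PP_listing a b" and V: "strict_mono V"
  shows "PP_listing (V \<circ> a) (V \<circ> b)"
proof -
  have "inj V" using V strict_mono_imp_inj_on by blast
  then have "{k. V (a k) = V (a i)} = {k. a k = a i}" for i
    by (simp add: inj_eq)
  moreover have "infinite (V ` range a)"
    using assms \<open>inj V\<close> by (simp add: PP_listing_def finite_image_iff inj_on_subset)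
  ultimately show ?thesis
    using assms \<open>inj V\<close>
    by (auto simp: PP_listing_def strict_mono_def inj_eq image_image)
qed

lemma
  assumes "PP_listing a b"
  shows in_PP_pairs_of: "in_PP (pairs_of a b)"
    and bseq_pairs_of: "bseq (pairs_of a b) = b"
    and aseq_pairs_of: "aseq (pairs_of a b) = a"
proof -
  let ?A = "pairs_of a b"
  have b: "strict_mono b" and "inj b"
    using assms strict_mono_imp_inj_on by (auto simp: PP_listing_def)
  have sec: "sec ?A x = b ` {i. a i = x}" for x
    by (auto simp: sec_def pairs_of_def)
  have infinite_sec: "infinite (sec ?A x)" if ne: "sec ?A x \<noteq> {}" for x
  proof -
    obtain i where "a i = x" using ne by (auto simp: sec)
    then show ?thesis
      using assms \<open>inj b\<close> by (auto simp: sec PP_listing_def finite_image_iff inj_on_subset)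
  qed
  have "{x. infinite (sec ?A x)} = range a"
  proof (intro set_eqI iffI)
    fix x assume "x \<in> {x. infinite (sec ?A x)}"
    then have "sec ?A x \<noteq> {}" by auto
    then show "x \<in> range a" by (auto simp: sec)
  next
    fix x assume "x \<in> range a"
    then have "sec ?A x \<noteq> {}" by (auto simp: sec)
    then show "x \<in> {x. infinite (sec ?A x)}" using infinite_sec by blast
  qed
  moreover have "sec ?A x \<inter> sec ?A x' = {}" if "x \<noteq> x'" for x x'
    using that \<open>inj b\<close> by (auto simp: sec inj_eq)
  moreover have "(x, y) \<in> ?A \<longleftrightarrow> (\<exists>i. x = a i \<and> y = b i)" for x y
    by (auto simp: pairs_of_def)
  ultimately show "in_PP (pairs_of a b)"
    using assms infinite_sec unfolding in_PP_def PP_listing_def by metis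
  have "snd ` ?A = range b"
    by (auto simp: pairs_of_def image_image)
  then show bs: "bseq ?A = b"
    using enumerate_range_strict_mono[OF b] by (simp add: bseq_def fun_eq_iff)
  have "(THE x. (x, b i) \<in> ?A) = a i" for i
    using \<open>inj b\<close> by (auto simp: pairs_of_def inj_eq intro!: the_equality)
  then show "aseq ?A = a"
    by (simp add: aseq_def bs fun_eq_iff)
qed

lemma
  assumes P: "in_PP A"
  shows PP_listing_aseq_bseq: "PP_listing (aseq A) (bseq A)"
    and pairs_of_aseq_bseq: "pairs_of (aseq A) (bseq A) = A"
proof -
  have secs: "\<And>x. sec A x \<noteq> {} \<Longrightarrow> infinite (sec A x)"
    and disj: "\<And>x x'. x \<noteq> x' \<Longrightarrow> sec A x \<inter> sec A x' = {}"
    and "infinite {x. infinite (sec A x)}"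
    using P by (auto simp: in_PP_def)
  have uniq: "(x, y) \<in> A \<Longrightarrow> (x', y) \<in> A \<Longrightarrow> x = x'" for x x' y
    using disj[of x x'] by (auto simp: sec_def)
  obtain x0 where "infinite (sec A x0)"
    using \<open>infinite {x. infinite (sec A x)}\<close> not_finite_existsD by blast
  moreover have "sec A x0 \<subseteq> snd ` A" by (force simp: sec_def)
  ultimately have S: "infinite (snd ` A)" using finite_subset by blast
  have "bseq A = enumerate (snd ` A)"
    by (simp add: bseq_def fun_eq_iff)
  then have b: "strict_mono (bseq A)" and rb: "range (bseq A) = snd ` A"
    using S by (simp_all add: strict_mono_enumerate range_enumerate)
  have abA: "(aseq A i, bseq A i) \<in> A" for i
  proof -
    obtain x where x: "(x, bseq A i) \<in> A" using rb by force
    then have "aseq A i = x" unfolding aseq_def using uniq by blast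
    with x show ?thesis by simp
  qed
  show A: "pairs_of (aseq A) (bseq A) = A"
  proof
    show "pairs_of (aseq A) (bseq A) \<subseteq> A" using abA by (auto simp: pairs_of_def)
    show "A \<subseteq> pairs_of (aseq A) (bseq A)"
    proof
      fix p assume "p \<in> A"
      then obtain i where "snd p = bseq A i" using rb by (metis image_eqI rangeE)
      then show "p \<in> pairs_of (aseq A) (bseq A)"
        using abA[of i] \<open>p \<in> A\<close> uniq by (cases p) (auto simp: pairs_of_def)
    qed
  qed
  have "inj (bseq A)" using b strict_mono_imp_inj_on by blast
  then have sec: "sec A x = bseq A ` {i. aseq A i = x}" for x
    by (subst A[symmetric]) (auto simp: sec_def pairs_of_def)
  have "infinite {k. aseq A k = aseq A i}" for i
  proof -
    have "sec A (aseq A i) \<noteq> {}" using abA[of i] by (auto simp: sec_def)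
    then show ?thesis using secs sec by (metis finite_imageI)
  qed
  moreover have "sec A x = {}" if "x \<notin> range (aseq A)" for x
    using that by (auto simp: sec)
  then have "{x. infinite (sec A x)} \<subseteq> range (aseq A)"
    by (metis (mono_tags) finite.emptyI mem_Collect_eq subsetI)
  moreover have "aseq A i < bseq A i" "aseq A i \<noteq> bseq A j" for i j
    using P abA[of i] abA[of j] unfolding in_PP_def by blast+
  ultimately show "PP_listing (aseq A) (bseq A)"
    using b \<open>infinite {x. infinite (sec A x)}\<close>
    by (auto simp: PP_listing_def dest: finite_subset)
qed

lemma sym_val_eq_listing_val: "sym_val A = listing_val (aseq A) (bseq A)"
proof
  fix s show "sym_val A s = listing_val (aseq A) (bseq A) s" by (cases s) simp_all
qed

lemma realizes_iff: "realizes A \<tau> \<longleftrightarrow> \<tau> = (\<lambda>s t. sym_val A s \<le> sym_val A t)"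
  by (auto simp: realizes_def fun_eq_iff)

lemma realizes_unique: "realizes A \<tau> \<Longrightarrow> realizes A \<tau>' \<Longrightarrow> \<tau> = \<tau>'"
  by (simp add: realizes_iff)

lemma realizes_pairs_of:
  assumes "PP_listing a b"
  shows "realizes (pairs_of a b) (\<lambda>s t. listing_val a b s \<le> listing_val a b t)"
  using assms by (simp add: realizes_iff sym_val_eq_listing_val aseq_pairs_of bseq_pairs_of)

lemma omega_type_listing:
  assumes L: "PP_listing a b"
  shows "omega_type (\<lambda>s t. listing_val a b s \<le> listing_val a b t)"
    (is "omega_type ?\<tau>")
proof -
  let ?v = "listing_val a b"
  have b: "strict_mono b" and ab: "\<And>i. a i < b i" and ne: "\<And>i j. a i \<noteq> b j"
    and "inj b"
    using L strict_mono_imp_inj_on by (auto simp: PP_listing_def)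
  then have ne': "\<And>i j. b j \<noteq> a i" by metis
  have cls: "sym_cls ?\<tau> s = {t. ?v t = ?v s}" for s
    by (auto simp: sym_cls_def)
  have clsY: "sym_cls ?\<tau> (Y j) = {Y j}" for j
  proof -
    have "?v t = b j \<longleftrightarrow> t = Y j" for t
      using ne \<open>inj b\<close> by (cases t) (auto simp: inj_eq)
    then show ?thesis by (simp add: cls)
  qed
  have clsX: "sym_cls ?\<tau> (X i) = X ` {k. a k = a i}" for i
  proof -
    have "?v t = a i \<longleftrightarrow> t \<in> X ` {k. a k = a i}" for t
      using ne' by (cases t) auto
    then show ?thesis by (auto simp: cls)
  qed
  have "infinite (X ` {k. a k = a i})" for i
    using L by (simp add: PP_listing_def finite_image_iff inj_on_def)
  then have classes: "(\<exists>i. sym_cls ?\<tau> s = {Y i}) \<or>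
      (infinite (sym_cls ?\<tau> s) \<and> (\<forall>t\<in>sym_cls ?\<tau> s. \<exists>i. t = X i))" for s
    by (cases s) (auto simp: clsX clsY)
  have "{sym_cls ?\<tau> (X i) | i. True} = (\<lambda>v. X ` {k. a k = v}) ` range a"
    by (auto simp: clsX)
  moreover have "inj_on (\<lambda>v. X ` {k. a k = v}) (range a)"
    by (auto simp: inj_on_def)
  ultimately have "infinite {sym_cls ?\<tau> (X i) | i. True}"
    using L by (simp add: PP_listing_def finite_image_iff)
  moreover have "{sym_cls ?\<tau> t | t. sym_lt ?\<tau> t s} \<subseteq> (\<lambda>v. {t. ?v t = v}) ` {..<?v s}" for s
    by (auto simp: sym_lt_def cls)
  then have "finite {sym_cls ?\<tau> t | t. sym_lt ?\<tau> t s}" for s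
    by (meson finite_imageI finite_lessThan finite_subset)
  moreover have "sym_lt ?\<tau> (Y i) (Y j)" if "i < j" for i j
    using strict_monoD[OF b that] by (simp add: sym_lt_def)
  moreover have "sym_lt ?\<tau> (X i) (Y i)" for i
    using ab[of i] by (simp add: sym_lt_def)
  ultimately show ?thesis
    using classes unfolding omega_type_def by auto
qed

lemma omega_type_sym_val:
  assumes "in_PP A"
  shows "omega_type (\<lambda>s t. sym_val A s \<le> sym_val A t)"
  using omega_type_listing[OF PP_listing_aseq_bseq[OF assms]]
  by (simp add: sym_val_eq_listing_val)

lemma ex1_type:
  assumes "A \<in> PP"
  shows "\<exists>!\<tau>. omega_type \<tau> \<and> A \<in> PP_type \<tau>"
  using assms omega_type_sym_val by (auto simp: PP_type_def PP_def realizes_iff)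

definition type_rank :: "(sym \<Rightarrow> sym \<Rightarrow> bool) \<Rightarrow> sym \<Rightarrow> nat" where
  "type_rank \<tau> s = card {sym_cls \<tau> t | t. sym_lt \<tau> t s}"

lemma type_rank_le_iff:
  assumes "omega_type \<tau>"
  shows "\<tau> s t \<longleftrightarrow> type_rank \<tau> s \<le> type_rank \<tau> t"
proof -
  have refl: "\<And>s. \<tau> s s" and trans: "\<And>s t u. \<tau> s t \<Longrightarrow> \<tau> t u \<Longrightarrow> \<tau> s u"
    and total: "\<And>s t. \<tau> s t \<or> \<tau> t s"
    and fin: "\<And>s. finite {sym_cls \<tau> t | t. sym_lt \<tau> t s}"
    using assms unfolding omega_type_def by blast+
  define below where "below s = {sym_cls \<tau> t | t. sym_lt \<tau> t s}" for s
  have mono: "below s \<subseteq> below t" if "\<tau> s t" for s t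
    using that trans by (auto simp: below_def sym_lt_def)
  have strict: "below t \<subset> below s" if "sym_lt \<tau> t s" for s t
  proof -
    have "sym_cls \<tau> t \<notin> below t"
    proof
      assume "sym_cls \<tau> t \<in> below t"
      then obtain u where "sym_cls \<tau> t = sym_cls \<tau> u" "sym_lt \<tau> u t"
        by (auto simp: below_def)
      moreover have "t \<in> sym_cls \<tau> t" using refl by (simp add: sym_cls_def)
      ultimately show False by (simp add: sym_cls_def sym_lt_def)
    qed
    moreover have "sym_cls \<tau> t \<in> below s" using that by (auto simp: below_def)
    ultimately show ?thesis using that mono by (auto simp: sym_lt_def)
  qed
  show ?thesis
  proof
    assume "\<tau> s t" then show "type_rank \<tau> s \<le> type_rank \<tau> t"
      using mono fin by (simp add: type_rank_def below_def[symmetric] card_mono)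
  next
    assume "type_rank \<tau> s \<le> type_rank \<tau> t"
    moreover have "type_rank \<tau> t < type_rank \<tau> s" if "\<not> \<tau> s t"
    proof -
      have "below t \<subset> below s" using that total[of s t] strict[of t s] by (simp add: sym_lt_def)
      then show ?thesis
        using fin by (simp add: type_rank_def below_def[symmetric] psubset_card_mono)
    qed
    ultimately show "\<tau> s t" by linarith
  qed
qed

lemma sym_cls_type_rank:
  assumes "omega_type \<tau>"
  shows "sym_cls \<tau> s = {t. type_rank \<tau> t = type_rank \<tau> s}"
  using type_rank_le_iff[OF assms] by (auto simp: sym_cls_def)

lemma PP_listing_type_rank:
  assumes om: "omega_type \<tau>"
  shows "PP_listing (\<lambda>i. type_rank \<tau> (X i)) (\<lambda>j. type_rank \<tau> (Y j))"
proof -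
  let ?r = "type_rank \<tau>"
  have lt: "\<And>s t. sym_lt \<tau> s t \<longleftrightarrow> ?r s < ?r t"
    using type_rank_le_iff[OF om] by (auto simp: sym_lt_def)
  have refl: "\<And>s. \<tau> s s"
    and YY: "\<And>i j. i < j \<Longrightarrow> sym_lt \<tau> (Y i) (Y j)" and XY: "\<And>i. sym_lt \<tau> (X i) (Y i)"
    and classes: "\<And>s. (\<exists>i. sym_cls \<tau> s = {Y i}) \<or>
        (infinite (sym_cls \<tau> s) \<and> (\<forall>t\<in>sym_cls \<tau> s. \<exists>i. t = X i))"
    and "infinite {sym_cls \<tau> (X i) | i. True}"
    using om unfolding omega_type_def by blast+
  have cls: "sym_cls \<tau> s = {t. ?r t = ?r s}" for s
    by (rule sym_cls_type_rank[OF om])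
  have clsY: "sym_cls \<tau> (Y j) = {Y j}" for j
  proof -
    have mem: "Y j \<in> sym_cls \<tau> (Y j)" using refl by (simp add: sym_cls_def)
    then have "\<not> (\<forall>t\<in>sym_cls \<tau> (Y j). \<exists>i. t = X i)" by force
    then obtain i where "sym_cls \<tau> (Y j) = {Y i}" using classes[of "Y j"] by blast
    with mem show ?thesis by (metis singletonD)
  qed
  have X_class: "infinite (sym_cls \<tau> (X i)) \<and> (\<forall>t\<in>sym_cls \<tau> (X i). \<exists>k. t = X k)" for i
  proof -
    have "X i \<in> sym_cls \<tau> (X i)" using refl by (simp add: sym_cls_def)
    then have "sym_cls \<tau> (X i) \<noteq> {Y j}" for j by (intro notI) simp
    then show ?thesis using classes[of "X i"] by blast
  qed
  have "sym_cls \<tau> (X i) \<subseteq> X ` {k. ?r (X k) = ?r (X i)}" for i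
  proof
    fix t assume t: "t \<in> sym_cls \<tau> (X i)"
    then obtain k where "t = X k" using X_class by blast
    with t show "t \<in> X ` {k. ?r (X k) = ?r (X i)}" by (auto simp: cls)
  qed
  then have "infinite {k. ?r (X k) = ?r (X i)}" for i
    using X_class by (meson finite_imageI finite_subset)
  moreover have "?r (X i) \<noteq> ?r (Y j)" for i j
    using clsY[of j] by (auto simp: cls)
  moreover have "{sym_cls \<tau> (X i) | i. True} = (\<lambda>v. {t. ?r t = v}) ` range (\<lambda>i. ?r (X i))"
    by (auto simp: cls)
  then have "infinite (range (\<lambda>i. ?r (X i)))"
    using \<open>infinite {sym_cls \<tau> (X i) | i. True}\<close> by auto
  ultimately show ?thesis
    using YY XY by (simp add: PP_listing_def lt strict_mono_def)
qed

section \<open>Density\<close>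

fun greedy :: "(nat list \<Rightarrow> nat set) \<Rightarrow> nat \<Rightarrow> nat" where
  "greedy T r =
     (let l = map (greedy T) [0..<r] in LEAST v. v \<in> T l \<and> (\<forall>w\<in>set l. w < v))"

declare greedy.simps [simp del]

lemma greedy_in_target:
  assumes "\<And>r. (\<And>k. k < r \<Longrightarrow> greedy T k \<in> T (map (greedy T) [0..<k])) \<Longrightarrow>
      infinite (T (map (greedy T) [0..<r]))"
  shows "greedy T r \<in> T (map (greedy T) [0..<r]) \<and> (\<forall>k<r. greedy T k < greedy T r)"
proof (induction r rule: less_induct)
  case (less r)
  let ?l = "map (greedy T) [0..<r]"
  have "infinite (T ?l)" using assms less by blast
  then obtain v where "v \<in> T ?l" "Max (insert 0 (set ?l)) < v"
    using infinite_nat_iff_unbounded by blast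
  then have "\<exists>v. v \<in> T ?l \<and> (\<forall>w\<in>set ?l. w < v)"
    by (meson List.finite_set Max_ge finite_insert le_less_trans subsetD subset_insertI)
  moreover have "greedy T r = (LEAST v. v \<in> T ?l \<and> (\<forall>w\<in>set ?l. w < v))"
    by (subst greedy.simps) (simp only: Let_def)
  ultimately have "greedy T r \<in> T ?l \<and> (\<forall>w\<in>set ?l. w < greedy T r)"
    using LeastI_ex[of "\<lambda>v. v \<in> T ?l \<and> (\<forall>w\<in>set ?l. w < v)"] by simp
  then show ?case by auto
qed

lemma PP_listing_embeds:
  assumes L: "PP_listing a b" and A: "in_PP A"
  obtains V where "strict_mono V" and "pairs_of (V \<circ> a) (V \<circ> b) \<subseteq> A"
proof -
  have "inj b" and ab: "\<And>i. a i < b i" and ne: "\<And>i j. a i \<noteq> b j"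
    using L strict_mono_imp_inj_on by (auto simp: PP_listing_def)
  have secs: "\<And>x. x \<in> fst ` A \<Longrightarrow> infinite (sec A x)"
    and "infinite {x. infinite (sec A x)}"
    using A by (auto simp: in_PP_def sec_def)
  moreover have "{x. infinite (sec A x)} \<subseteq> fst ` A"
    by (force simp: sec_def dest: not_finite_existsD)
  ultimately have "infinite (fst ` A)" using finite_subset by blast
  define T where "T l = (if length l \<in> range b then sec A (l ! a (inv b (length l)))
      else fst ` A)" for l
  define V where "V = greedy T"
  have V: "V r \<in> T (map V [0..<r]) \<and> (\<forall>k<r. V k < V r)" for r
    unfolding V_def
  proof (rule greedy_in_target)
    fix r assume IH: "\<And>k. k < r \<Longrightarrow> greedy T k \<in> T (map (greedy T) [0..<k])"
    show "infinite (T (map (greedy T) [0..<r]))"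
    proof (cases "r \<in> range b")
      case True
      then obtain j where r: "r = b j" by blast
      have "a j \<notin> range b" using ne by blast
      then have "greedy T (a j) \<in> fst ` A"
        using IH[of "a j"] ab[of j] by (simp add: r T_def)
      with True show ?thesis
        using secs ab[of j] \<open>inj b\<close> by (simp add: T_def r)
    qed (simp add: T_def \<open>infinite (fst ` A)\<close>)
  qed
  then have "strict_mono V" by (simp add: strict_mono_def)
  moreover have "V (b j) \<in> sec A (V (a j))" for j
    using V[of "b j"] ab[of j] \<open>inj b\<close> by (simp add: T_def)
  then have "pairs_of (V \<circ> a) (V \<circ> b) \<subseteq> A" by (auto simp: pairs_of_def sec_def)
  ultimately show ?thesis by (rule that)
qed

lemma density:
  assumes om: "omega_type \<tau>" and A: "in_PP A"
  shows "\<exists>B. B \<subseteq> A \<and> B \<in> PP_type \<tau>"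
proof -
  define a where "a i = type_rank \<tau> (X i)" for i
  define b where "b j = type_rank \<tau> (Y j)" for j
  have L: "PP_listing a b"
    unfolding a_def b_def by (rule PP_listing_type_rank[OF om])
  then obtain V where V: "strict_mono V" and sub: "pairs_of (V \<circ> a) (V \<circ> b) \<subseteq> A"
    using PP_listing_embeds A by blast
  have LB: "PP_listing (V \<circ> a) (V \<circ> b)" by (rule PP_listing_comp[OF L V])
  have "listing_val (V \<circ> a) (V \<circ> b) s = V (type_rank \<tau> s)" for s
    by (cases s) (simp_all add: a_def b_def)
  then have "realizes (pairs_of (V \<circ> a) (V \<circ> b)) \<tau>"
    using realizes_pairs_of[OF LB] V
    by (simp add: strict_mono_less_eq type_rank_le_iff[OF om, symmetric])
  then show ?thesis
    using LB sub by (auto simp: PP_type_def PP_def in_PP_pairs_of)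
qed

section \<open>Borelness\<close>

lemma is_Borel_family_iff_pred:
  "is_Borel_family F \<longleftrightarrow> Measurable.pred borel (\<lambda>f. Collect f \<in> F)"
proof -
  have "char_fun ` F = {f. Collect f \<in> F}"
  proof (intro set_eqI iffI)
    fix f assume "f \<in> {f. Collect f \<in> F}"
    moreover have "f = char_fun (Collect f)" by (simp add: char_fun_def)
    ultimately show "f \<in> char_fun ` F" by blast
  qed (auto simp: char_fun_def)
  then show ?thesis by (simp add: is_Borel_family_def pred_def)
qed

lemma pred_apply_borel [measurable]: "Measurable.pred borel (\<lambda>f :: nat \<times> nat \<Rightarrow> bool. f p)"
proof -
  have "open ((\<lambda>f :: nat \<times> nat \<Rightarrow> bool. f p) -` {True})"
    by (rule open_vimage) (simp_all add: open_discrete)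
  then show ?thesis by (simp add: pred_def borel_open vimage_def)
qed

lemma in_PP_iff_unbounded:
  "in_PP A \<longleftrightarrow>
     (\<forall>n. \<exists>x\<ge>n. \<forall>m. \<exists>y\<ge>m. (x, y) \<in> A) \<and>
     (\<forall>x. (\<exists>y. (x, y) \<in> A) \<longrightarrow> (\<forall>m. \<exists>y\<ge>m. (x, y) \<in> A)) \<and>
     (\<forall>x x'. x \<noteq> x' \<longrightarrow> \<not> (\<exists>y. (x, y) \<in> A \<and> (x', y) \<in> A)) \<and>
     (\<forall>x y. (x, y) \<in> A \<longrightarrow> x < y) \<and>
     (\<forall>x y x' y'. (x, y) \<in> A \<longrightarrow> (x', y') \<in> A \<longrightarrow> x \<noteq> y')"
  by (simp add: in_PP_def sec_def infinite_nat_iff_unbounded_le disjoint_iff)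

lemma pred_in_PP [measurable]: "Measurable.pred borel (\<lambda>f. in_PP (Collect f))"
  unfolding in_PP_iff_unbounded mem_Collect_eq by measurable

text \<open>Arithmetical definitions of \<open>bseq A j = v\<close> and \<open>sym_val A s = u\<close> in terms of the
  characteristic function \<open>f\<close> of \<open>A\<close>; the list \<open>ws\<close> enumerates the second coordinates below
  \<open>v\<close>.\<close>

definition bseq_is :: "(nat \<times> nat \<Rightarrow> bool) \<Rightarrow> nat \<Rightarrow> nat \<Rightarrow> bool" where
  "bseq_is f j v \<longleftrightarrow> (\<exists>x. f (x, v)) \<and>
     (\<exists>ws :: nat list. distinct ws \<and> length ws = j \<and> (\<forall>w. w \<in> set ws \<longleftrightarrow> w < v \<and> (\<exists>x. f (x, w))))"

fun sym_val_is :: "(nat \<times> nat \<Rightarrow> bool) \<Rightarrow> sym \<Rightarrow> nat \<Rightarrow> bool" where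
  "sym_val_is f (Y j) v \<longleftrightarrow> bseq_is f j v"
| "sym_val_is f (X i) u \<longleftrightarrow> (\<exists>v. bseq_is f i v \<and> f (u, v))"

lemma pred_sym_val_is [measurable]: "Measurable.pred borel (\<lambda>f. sym_val_is f s u)"
  by (cases s) (simp_all add: bseq_is_def)

lemma card_eq_iff_distinct_list:
  assumes "finite T"
  shows "card T = n \<longleftrightarrow> (\<exists>ws. distinct ws \<and> length ws = n \<and> set ws = T)"
  using finite_distinct_list[OF assms] distinct_card by metis

lemma bseq_is_iff:
  assumes "in_PP A"
  shows "bseq_is (\<lambda>p. p \<in> A) j v \<longleftrightarrow> bseq A j = v"
proof -
  have b: "strict_mono (bseq A)"
    using PP_listing_aseq_bseq[OF assms] by (simp add: PP_listing_def)
  have "snd ` pairs_of (aseq A) (bseq A) = range (bseq A)"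
    by (simp add: pairs_of_def image_image)
  then have "range (bseq A) = snd ` A"
    by (simp add: pairs_of_aseq_bseq[OF assms])
  then have "range (bseq A) = {w. \<exists>x. (x, w) \<in> A}" by force
  then show ?thesis
    by (simp add: bseq_is_def strict_mono_eq_iff_card_below[OF b] card_eq_iff_distinct_list
        set_eq_iff conj_commute)
qed

lemma sym_val_is_iff:
  assumes "in_PP A"
  shows "sym_val_is (\<lambda>p. p \<in> A) s u \<longleftrightarrow> sym_val A s = u"
proof (cases s)
  case (X i)
  have "inj (bseq A)"
    using PP_listing_aseq_bseq[OF assms] strict_mono_imp_inj_on by (auto simp: PP_listing_def)
  then have "(u, bseq A i) \<in> pairs_of (aseq A) (bseq A) \<longleftrightarrow> aseq A i = u"
    by (auto simp: pairs_of_def inj_eq)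
  with X show ?thesis by (simp add: bseq_is_iff[OF assms] pairs_of_aseq_bseq[OF assms])
qed (simp add: bseq_is_iff[OF assms])

lemma Borel_PP_type: "is_Borel_family (PP_type \<tau>)"
proof -
  have "Collect f \<in> PP_type \<tau> \<longleftrightarrow> in_PP (Collect f) \<and>
      (\<forall>s t. \<tau> s t \<longleftrightarrow> (\<exists>u u'. sym_val_is f s u \<and> sym_val_is f t u' \<and> u \<le> u'))" for f
    using sym_val_is_iff[of "Collect f"]
    by (auto simp: PP_type_def PP_def realizes_def)
  then show ?thesis
    unfolding is_Borel_family_iff_pred by simp measurable
qed

section \<open>Counting types\<close>

lemma relations_lepoll_nat_sets:
  "(UNIV :: ('a::countable \<Rightarrow> 'a \<Rightarrow> bool) set) \<lesssim> (UNIV :: nat set set)"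
proof -
  have "inj (\<lambda>R :: 'a \<Rightarrow> 'a \<Rightarrow> bool. to_nat ` {(s, t). R s t})"
  proof (rule injI)
    fix R R' :: "'a \<Rightarrow> 'a \<Rightarrow> bool"
    assume "to_nat ` {(s, t). R s t} = to_nat ` {(s, t). R' s t}"
    then have "{(s, t). R s t} = {(s, t). R' s t}"
      by (simp add: inj_image_eq_iff)
    then show "R = R'"
      by (simp add: fun_eq_iff set_eq_iff)
  qed
  then show ?thesis by (auto simp: lepoll_def)
qed

lemma omega_type_parts_lepoll_nat_sets:
  "{PP_type \<tau> | \<tau>. omega_type \<tau>} \<lesssim> (UNIV :: nat set set)"
proof -
  have "{PP_type \<tau> | \<tau>. omega_type \<tau>} = PP_type ` {\<tau>. omega_type \<tau>}" by blast
  then have "{PP_type \<tau> | \<tau>. omega_type \<tau>} \<lesssim> (UNIV :: (sym \<Rightarrow> sym \<Rightarrow> bool) set)"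
    by (metis image_lepoll lepoll_trans subset_UNIV subset_imp_lepoll)
  then show ?thesis using relations_lepoll_nat_sets by (rule lepoll_trans)
qed

text \<open>The odd positions give every even value \<open>2x\<close> infinitely often; the position \<open>2m\<close> joins
  the class of \<open>x\<^sub>1\<close> (value \<open>0\<close>) if \<open>m \<in> S\<close> and the class of value \<open>2\<close> otherwise.\<close>

definition witness_aseq :: "nat set \<Rightarrow> nat \<Rightarrow> nat" where
  "witness_aseq S i =
     (if even i then (if i div 2 \<in> S then 0 else 2) else 2 * fst (prod_decode (i div 2)))"

definition witness_bseq :: "nat \<Rightarrow> nat" where
  "witness_bseq i = 2 * i + 3"

definition witness_type :: "nat set \<Rightarrow> sym \<Rightarrow> sym \<Rightarrow> bool" where
  "witness_type S s t \<longleftrightarrow>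
     listing_val (witness_aseq S) witness_bseq s \<le> listing_val (witness_aseq S) witness_bseq t"

lemma witness_aseq_odd: "witness_aseq S (Suc (2 * prod_encode (x, n))) = 2 * x"
  by (simp add: witness_aseq_def)

lemma PP_listing_witness: "PP_listing (witness_aseq S) witness_bseq"
proof -
  have fst_le: "fst (prod_decode k) \<le> k" for k
    by (metis le_prod_encode_1 prod.collapse prod_decode_inverse)
  have "2 * fst (prod_decode (i div 2)) < 2 * i + 3" for i
    using fst_le[of "i div 2"] times_div_less_eq_dividend[of 2 i] by linarith
  then have "witness_aseq S i < witness_bseq i" for i
    by (simp add: witness_aseq_def witness_bseq_def)
  moreover have "witness_aseq S i \<noteq> witness_bseq j" for i j
  proof -
    have "even (witness_aseq S i)" by (simp add: witness_aseq_def)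
    then show ?thesis by (auto simp: witness_bseq_def)
  qed
  moreover have even_class: "infinite {k. witness_aseq S k = 2 * x}" for x
  proof -
    have "inj (\<lambda>n. Suc (2 * prod_encode (x, n)))"
      by (auto simp: inj_on_def prod_encode_eq)
    then have "infinite (range (\<lambda>n. Suc (2 * prod_encode (x, n))))"
      by (rule range_inj_infinite)
    moreover have "range (\<lambda>n. Suc (2 * prod_encode (x, n))) \<subseteq> {k. witness_aseq S k = 2 * x}"
      by (auto simp: witness_aseq_odd)
    ultimately show ?thesis by (meson infinite_super)
  qed
  moreover have "infinite {k. witness_aseq S k = witness_aseq S i}" for i
  proof -
    have "\<exists>x. witness_aseq S i = 2 * x"
      by (auto simp: witness_aseq_def intro: exI[of _ 0] exI[of _ 1])
    then show ?thesis using even_class by auto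
  qed
  moreover have "range (\<lambda>x. 2 * x) \<subseteq> range (witness_aseq S)"
    by (metis image_subsetI rangeI witness_aseq_odd)
  then have "infinite (range (witness_aseq S))"
    using range_inj_infinite[of "\<lambda>x::nat. 2 * x"] by (auto simp: inj_on_def dest: finite_subset)
  ultimately show ?thesis
    by (auto simp: PP_listing_def strict_mono_def witness_bseq_def)
qed

lemma witness_type_equivalent_iff:
  "witness_type S (X (2 * m)) (X 1) \<and> witness_type S (X 1) (X (2 * m)) \<longleftrightarrow> m \<in> S"
proof -
  have "witness_aseq S 1 = 0"
    using witness_aseq_odd[of S 0 0] by (simp add: prod_encode_def)
  then show ?thesis by (simp add: witness_type_def witness_aseq_def)
qed

lemma nat_sets_lepoll_omega_type_parts:
  "(UNIV :: nat set set) \<lesssim> {PP_type \<tau> | \<tau>. omega_type \<tau>}"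
proof -
  have in_part: "pairs_of (witness_aseq S) witness_bseq \<in> PP_type (witness_type S)" for S
    using PP_listing_witness realizes_pairs_of
    by (simp add: PP_type_def PP_def in_PP_pairs_of witness_type_def[abs_def])
  have "inj (\<lambda>S. PP_type (witness_type S))"
  proof (rule injI)
    fix S T assume "PP_type (witness_type S) = PP_type (witness_type T)"
    then have "realizes (pairs_of (witness_aseq S) witness_bseq) (witness_type T)"
      using in_part[of S] by (simp add: PP_type_def)
    then have "witness_type T = witness_type S"
      using in_part[of S] by (auto simp: PP_type_def intro: realizes_unique)
    then have "m \<in> S \<longleftrightarrow> m \<in> T" for m
      using witness_type_equivalent_iff[of S m] witness_type_equivalent_iff[of T m] by simp
    then show "S = T" by blast
  qed
  moreover have "omega_type (witness_type S)" for S
    using omega_type_listing[OF PP_listing_witness] by (simp add: witness_type_def[abs_def])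
  ultimately show ?thesis
    by (auto simp: lepoll_def)
qed

theorem mainTheorem11:
  shows "(\<forall>\<tau>. omega_type \<tau> \<longrightarrow>
            is_Borel_family (PP_type \<tau>) \<and>
            (\<forall>A\<in>PP. \<exists>B. B \<subseteq> A \<and> B \<in> PP_type \<tau>)) \<and>
         (\<forall>A\<in>PP. \<exists>!\<tau>. omega_type \<tau> \<and> A \<in> PP_type \<tau>) \<and>
         {PP_type \<tau> | \<tau>. omega_type \<tau>} \<approx> (UNIV :: real set)"
proof -
  have "{PP_type \<tau> | \<tau>. omega_type \<tau>} \<approx> (UNIV :: nat set set)"
    by (rule lepoll_antisym[OF omega_type_parts_lepoll_nat_sets nat_sets_lepoll_omega_type_parts])
  then have "{PP_type \<tau> | \<tau>. omega_type \<tau>} \<approx> (UNIV :: real set)"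
    using nat_sets_eqpoll_reals by (rule eqpoll_trans)
  then show ?thesis
    using Borel_PP_type density ex1_type by (simp add: PP_def)
qed

end
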